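(* Let $q\ge 1$, let $u:(0,\infty)\to[0,\infty)$, and put $\psi(s)=s\,u(s)$. Assume $\psi$ is non-decreasing on $(0,\infty)$ and bounded, with $\kappa:=\sup_{s>0}\psi(s)=\lim_{s\to\infty}\psi(s)$. Let $x_1,\dots,x_n\in\mathbb{R}^q$ be arbitrary data points, with the convention stated in the context for terms with $x_i=0$. (a) Let $\eta>0$ and suppose $\kappa<1$. Then every symmetric positive definite $q\times q$ matrix $\Sigma$ satisfying $$\Sigma=\frac1n\sum_{i=1}^n u(x_i^{\mathrm T}\Sigma^{-1}x_i)\,x_ix_i^{\mathrm T}+\eta I_q$$ satisfies $$\eta I_q\le \Sigma\le \frac{\eta}{1-\kappa}I_q .$$ (b) Let $0<\gamma\le 1$ and suppose $\kappa<1/(1-\gamma)$, i.e. $(1-\gamma)\kappa<1$. Then every symmetric positive definite $q\times q$ matrix $\Sigma$ satisfying $$\Sigma=(1-\gamma)\frac1n\sum_{i=1}^n u(x_i^{\mathrm T}\Sigma^{-1}x_i)\,x_ix_i^{\mathrm T}+\gamma I_q$$ satisfies $$\gamma I_q\le \Sigma\le \frac{\gamma}{1-(1-\gamma)\kappa}I_q .$$ Consequently, for any estimator defined, for every finite data set, as a positive definite solution of the equation in (a) (with $\eta>0$, $\kappa<1$), resp. of the equation in (b) (with $0<\gamma\le1$, $(1-\gamma)\kappa<1$), the finite-sample contamination breakdown point equals $1$ at every data set; i.e., the estimator cannot break down.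
   Context: Inequalities between symmetric matrices refer to the Loewner order: $A\le B$ means $B-A$ is positive semidefinite; $I_q$ is the $q\times q$ identity. Convention: if some data point $z=0$, the corresponding summand $u(z^{\mathrm T}Az)zz^{\mathrm T}$ is interpreted as the zero matrix. Finite-sample contamination breakdown point: for a data set $X=\{x_1,\dots,x_n\}$ and $m\ge1$, add arbitrary points $Y=\{y_1,\dots,y_m\}$ to form $Z=X\cup Y$. For a scatter statistic $V(\cdot)$ (taking values in positive definite matrices), breakdown at contamination level $m/(n+m)$ occurs if, over all choices of $Y$ with $|Y|=m$, either $V(Z)$ fails to exist for some $Y$, or the largest eigenvalue of $V(Z)$ is unbounded, or the smallest eigenvalue of $V(Z)$ is not bounded away from $0$ (equivalently $\sup_Y\|\log(V(X)^{-1/2}V(Z)V(X)^{-1/2})\|_F=\infty$). The breakdown point is the smallest $m/(n+m)$ at which breakdown occurs; it is said to equal $1$ when breakdown never occurs, for any $m$. *)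

theory Defs
  imports "HOL-Analysis.Analysis"
begin

definition spd :: "real^'q^'q \<Rightarrow> bool" where
  "spd A \<longleftrightarrow> transpose A = A \<and> (\<forall>x. x \<noteq> 0 \<longrightarrow> x \<bullet> (A *v x) > 0)"

definition loewner_le :: "real^'q^'q \<Rightarrow> real^'q^'q \<Rightarrow> bool" where
  "loewner_le A B \<longleftrightarrow> (\<forall>x. x \<bullet> ((B - A) *v x) \<ge> 0)"

definition outer :: "real^'q \<Rightarrow> real^'q^'q" where
  "outer x = (\<chi> i j. x $ i * x $ j)"

definition wterm :: "(real \<Rightarrow> real) \<Rightarrow> real^'q^'q \<Rightarrow> real^'q \<Rightarrow> real^'q^'q" where
  "wterm u A z = (if z = 0 then 0 else u (z \<bullet> (A *v z)) *\<^sub>R outer z)"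

definition msum :: "(real \<Rightarrow> real) \<Rightarrow> (real^'q) list \<Rightarrow> real^'q^'q \<Rightarrow> real^'q^'q" where
  "msum u xs S = (1 / real (length xs)) *\<^sub>R sum_list (map (wterm u (matrix_inv S)) xs)"

(* breakdown at contamination level m/(n+m) for an (everywhere defined) scatter
   statistic V on finite data sets (lists): the eigenvalues of V(X \<union> Y) are not
   bounded above, or not bounded away from 0, uniformly over Y with |Y| = m *)
definition breaks_down :: "((real^'q) list \<Rightarrow> real^'q^'q) \<Rightarrow> (real^'q) list \<Rightarrow> nat \<Rightarrow> bool" where
  "breaks_down V X m \<longleftrightarrow>
     \<not> (\<exists>c>0. \<exists>C. \<forall>Y. length Y = m \<longrightarrow>
          loewner_le (c *\<^sub>R mat 1) (V (X @ Y)) \<and> loewner_le (V (X @ Y)) (C *\<^sub>R mat 1))"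

definition breakdown_point :: "((real^'q) list \<Rightarrow> real^'q^'q) \<Rightarrow> (real^'q) list \<Rightarrow> real" where
  "breakdown_point V X =
     (if \<exists>m\<ge>1. breaks_down V X m
      then (let m = (LEAST m. m \<ge> 1 \<and> breaks_down V X m) in real m / real (length X + m))
      else 1)"

end

theory Submission
  imports Defs
begin

(* Taking the quadratic form of the fixed-point equation in a direction v gives
     v' S v = c * (1/n) sum_i u(s_i) (x_i' v)^2 + eta |v|^2,   s_i = x_i' S^-1 x_i,
   with c = 1 in (a) and c = 1 - gamma, eta = gamma in (b). Since u >= 0 this is at least
   eta |v|^2. For the upper bound let lam be the largest Rayleigh quotient of S. Then
   S^-1 >= I / lam, so |x_i|^2 <= lam s_i and
     u(s_i) (x_i' v)^2 <= u(s_i) |x_i|^2 |v|^2 <= lam psi(s_i) |v|^2 <= lam kappa |v|^2.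
   Hence lam <= c kappa lam + eta, i.e. lam <= eta / (1 - c kappa). Both bounds are
   independent of the data, so no contamination can drive the eigenvalues of the
   estimate to 0 or infinity. *)

lemma inner_scaleR_matrix_vector:
  fixes A :: "real^'n^'m"
  shows "v \<bullet> ((c *\<^sub>R A) *v w) = c * (v \<bullet> (A *v w))"
  by (simp flip: scaleR_matrix_vector_assoc)

lemma inner_scaleR_mat_1: "v \<bullet> ((c *\<^sub>R mat 1 :: real^'n^'n) *v w) = c * (v \<bullet> w)"
  by (simp add: inner_scaleR_matrix_vector)

lemma inner_sum_list_matrix_vector:
  fixes f :: "'a \<Rightarrow> real^'n^'m"
  shows "v \<bullet> (sum_list (map f xs) *v w) = (\<Sum>z\<leftarrow>xs. v \<bullet> (f z *v w))"
  by (induction xs) (auto simp: matrix_vector_mult_add_rdistrib inner_add_right)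

lemma outer_mult_vector: "outer z *v v = (z \<bullet> v) *\<^sub>R z"
  unfolding outer_def matrix_vector_mult_def vec_eq_iff inner_vec_def
  by (simp add: sum_distrib_left mult_ac)

lemma loewner_le_iff_inner: "loewner_le A B \<longleftrightarrow> (\<forall>x. x \<bullet> (A *v x) \<le> x \<bullet> (B *v x))"
  unfolding loewner_le_def by (simp add: matrix_vector_mult_diff_rdistrib inner_diff_right)

lemma spd_matrix_inv:
  fixes S :: "real^'n^'n"
  assumes "spd S"
  shows "S ** matrix_inv S = mat 1" and "matrix_inv S ** S = mat 1"
proof -
  have "\<forall>x. S *v x = 0 \<longrightarrow> x = 0"
    using assms unfolding spd_def by (metis inner_zero_right less_irrefl)
  then have "invertible S"
    using matrix_left_invertible_ker invertible_left_inverse by blast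
  then show "S ** matrix_inv S = mat 1" and "matrix_inv S ** S = mat 1"
    unfolding invertible_def matrix_inv_def by (metis (mono_tags, lifting) someI_ex)+
qed

lemma spd_mult_matrix_inv_vector:
  fixes S :: "real^'n^'n"
  assumes "spd S"
  shows "S *v (matrix_inv S *v x) = x"
  by (simp add: matrix_vector_mul_assoc spd_matrix_inv[OF assms])

lemma spd_inner_nonneg:
  fixes S :: "real^'n^'n"
  assumes "spd S"
  shows "0 \<le> x \<bullet> (S *v x)"
  using assms unfolding spd_def by (cases "x = 0") (auto intro: less_imp_le)

lemma spd_inner_matrix_inv_pos:
  fixes S :: "real^'n^'n"
  assumes "spd S" and "z \<noteq> 0"
  shows "0 < z \<bullet> (matrix_inv S *v z)"
proof -
  define y where "y = matrix_inv S *v z"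
  have Sy: "S *v y = z"
    unfolding y_def by (rule spd_mult_matrix_inv_vector[OF assms(1)])
  then have "y \<noteq> 0" using assms(2) by auto
  then have "0 < y \<bullet> (S *v y)" using assms(1) unfolding spd_def by auto
  then show ?thesis using Sy by (simp add: y_def inner_commute)
qed

lemma largest_rayleigh_quotient:
  fixes A :: "real^'n^'n"
  obtains lam where "\<And>v. v \<bullet> (A *v v) \<le> lam * (v \<bullet> v)"
    and "\<And>l. (\<And>v. v \<bullet> (A *v v) \<le> l * (v \<bullet> v)) \<Longrightarrow> lam \<le> l"
proof -
  define R where "R = {v \<bullet> (A *v v) / (v \<bullet> v) | v. v \<noteq> 0}"
  obtain e :: "real^'n" where "e \<noteq> 0" using zero_neq_one by blast
  then have R_ne: "R \<noteq> {}" unfolding R_def by blast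
  obtain K where K: "\<And>v. norm (A *v v) \<le> norm v * K"
    using bounded_linear.bounded[OF matrix_vector_mul_bounded_linear] by blast
  have "v \<bullet> (A *v v) / (v \<bullet> v) \<le> K" if "v \<noteq> 0" for v
  proof -
    have "v \<bullet> (A *v v) \<le> norm v * norm (A *v v)" by (rule norm_cauchy_schwarz)
    also have "\<dots> \<le> norm v * (norm v * K)" by (simp add: K mult_left_mono)
    finally show ?thesis
      using that by (simp add: divide_le_eq power2_norm_eq_inner[symmetric] power2_eq_square mult_ac)
  qed
  then have R_bdd: "bdd_above R" unfolding R_def by (auto intro: bdd_aboveI[of _ K])
  show thesis
  proof
    show "v \<bullet> (A *v v) \<le> Sup R * (v \<bullet> v)" for v
    proof (cases "v = 0")
      case False
      then have "v \<bullet> (A *v v) / (v \<bullet> v) \<le> Sup R"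
        by (intro cSup_upper[OF _ R_bdd]) (auto simp: R_def)
      then show ?thesis using False by (simp add: divide_le_eq)
    qed simp
    show "Sup R \<le> l" if "\<And>v. v \<bullet> (A *v v) \<le> l * (v \<bullet> v)" for l
      using R_ne that by (intro cSup_least) (auto simp: R_def divide_le_eq)
  qed
qed

(* With x = S y, expand 0 <= (lam y - x)' S (lam y - x) = lam^2 y'x - 2 lam |x|^2 + x' S x
   and use x' S x <= lam |x|^2. *)
lemma spd_inner_le_inner_matrix_inv:
  fixes S :: "real^'n^'n"
  assumes "spd S" and "lam > 0" and lam: "\<And>v. v \<bullet> (S *v v) \<le> lam * (v \<bullet> v)"
  shows "x \<bullet> x \<le> lam * (x \<bullet> (matrix_inv S *v x))"
proof -
  define y where "y = matrix_inv S *v x"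
  have Sy: "S *v y = x"
    unfolding y_def by (rule spd_mult_matrix_inv_vector[OF assms(1)])
  have "transpose S = S" using assms(1) spd_def by auto
  then have ySx: "y \<bullet> (S *v x) = x \<bullet> x"
    by (metis Sy dot_lmul_matrix inner_commute transpose_matrix_vector)
  define w where "w = lam *\<^sub>R y - x"
  have "w \<bullet> (S *v w) = lam\<^sup>2 * (y \<bullet> (S *v y)) - lam * (y \<bullet> (S *v x))
      - lam * (x \<bullet> (S *v y)) + x \<bullet> (S *v x)"
    unfolding w_def
    by (simp add: matrix_vector_mult_diff_distrib inner_diff_left inner_diff_right
        flip: matrix_scaleR_vector_ac) (simp add: algebra_simps power2_eq_square)
  also have "\<dots> = lam\<^sup>2 * (y \<bullet> x) - 2 * lam * (x \<bullet> x) + x \<bullet> (S *v x)"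
    using Sy ySx by simp
  also have "\<dots> \<le> lam * (lam * (y \<bullet> x) - x \<bullet> x)"
    using lam[of x] by (simp add: algebra_simps power2_eq_square)
  finally have "0 \<le> lam * (lam * (y \<bullet> x) - x \<bullet> x)"
    using spd_inner_nonneg[OF assms(1), of w] by linarith
  then show ?thesis
    using \<open>lam > 0\<close> by (simp add: zero_le_mult_iff y_def inner_commute)
qed

lemma inner_wterm_nonneg:
  assumes u_nonneg: "\<And>s. s > 0 \<Longrightarrow> u s \<ge> 0" and "spd S"
  shows "0 \<le> v \<bullet> (wterm u (matrix_inv S) z *v v)"
  using u_nonneg[OF spd_inner_matrix_inv_pos[OF \<open>spd S\<close>, of z]]
  by (simp add: wterm_def inner_scaleR_matrix_vector outer_mult_vector inner_commute[of v z])

lemma inner_wterm_le: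
  fixes S :: "real^'n^'n"
  assumes u_nonneg: "\<And>s. s > 0 \<Longrightarrow> u s \<ge> 0"
    and psi_le: "\<And>s. s > 0 \<Longrightarrow> s * u s \<le> kappa"
    and "spd S" and "lam > 0" and lam: "\<And>v. v \<bullet> (S *v v) \<le> lam * (v \<bullet> v)"
  shows "v \<bullet> (wterm u (matrix_inv S) z *v v) \<le> kappa * lam * (v \<bullet> v)"
proof (cases "z = 0")
  case True
  have "0 \<le> kappa" using psi_le[of 1] u_nonneg[of 1] by simp
  then show ?thesis using True \<open>lam > 0\<close> by (simp add: wterm_def)
next
  case False
  define s where "s = z \<bullet> (matrix_inv S *v z)"
  have "s > 0" unfolding s_def by (rule spd_inner_matrix_inv_pos[OF \<open>spd S\<close> False])
  have "u s \<ge> 0" using u_nonneg[OF \<open>s > 0\<close>] .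
  have "v \<bullet> (wterm u (matrix_inv S) z *v v) = u s * (z \<bullet> v)\<^sup>2"
    using False by (simp add: wterm_def s_def inner_scaleR_matrix_vector outer_mult_vector
        power2_eq_square inner_commute)
  also have "\<dots> \<le> u s * ((z \<bullet> z) * (v \<bullet> v))"
    by (rule mult_left_mono[OF Cauchy_Schwarz_ineq \<open>u s \<ge> 0\<close>])
  also have "\<dots> \<le> u s * ((lam * s) * (v \<bullet> v))"
    using spd_inner_le_inner_matrix_inv[OF \<open>spd S\<close> \<open>lam > 0\<close> lam, of z] \<open>u s \<ge> 0\<close>
    by (intro mult_left_mono mult_right_mono) (simp_all add: s_def)
  also have "\<dots> = (s * u s) * lam * (v \<bullet> v)" by simp
  also have "\<dots> \<le> kappa * lam * (v \<bullet> v)"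
    using psi_le[OF \<open>s > 0\<close>] \<open>lam > 0\<close> by (intro mult_right_mono) auto
  finally show ?thesis .
qed

lemma inner_msum_nonneg:
  assumes u_nonneg: "\<And>s. s > 0 \<Longrightarrow> u s \<ge> 0" and "spd S"
  shows "0 \<le> v \<bullet> (msum u xs S *v v)"
proof -
  have "0 \<le> (\<Sum>z\<leftarrow>xs. v \<bullet> (wterm u (matrix_inv S) z *v v))"
    using inner_wterm_nonneg[of u S, OF assms] by (intro sum_list_nonneg) auto
  then show ?thesis
    by (simp add: msum_def inner_scaleR_matrix_vector inner_sum_list_matrix_vector)
qed

lemma inner_msum_le:
  fixes S :: "real^'n^'n"
  assumes u_nonneg: "\<And>s. s > 0 \<Longrightarrow> u s \<ge> 0"
    and psi_le: "\<And>s. s > 0 \<Longrightarrow> s * u s \<le> kappa"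
    and "spd S" and "lam > 0" and "\<And>v. v \<bullet> (S *v v) \<le> lam * (v \<bullet> v)"
    and "xs \<noteq> []"
  shows "v \<bullet> (msum u xs S *v v) \<le> kappa * lam * (v \<bullet> v)"
proof -
  let ?B = "kappa * lam * (v \<bullet> v)"
  have "(\<Sum>z\<leftarrow>xs. v \<bullet> (wterm u (matrix_inv S) z *v v)) \<le> (\<Sum>z\<leftarrow>xs. ?B)"
    by (intro sum_list_mono inner_wterm_le[OF assms(1-5)])
  also have "\<dots> = real (length xs) * ?B" by (simp add: sum_list_triv)
  finally show ?thesis
    using \<open>xs \<noteq> []\<close>
    by (simp add: msum_def inner_scaleR_matrix_vector inner_sum_list_matrix_vector field_simps)
qed

lemma fixed_point_loewner_bounds:
  fixes S :: "real^'n^'n"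
  assumes u_nonneg: "\<And>s. s > 0 \<Longrightarrow> u s \<ge> 0"
    and psi_le: "\<And>s. s > 0 \<Longrightarrow> s * u s \<le> kappa"
    and "0 \<le> c" and "c * kappa < 1" and "eta > 0" and "xs \<noteq> []" and "spd S"
    and fixed: "S = c *\<^sub>R msum u xs S + eta *\<^sub>R mat 1"
  shows "loewner_le (eta *\<^sub>R mat 1) S"
    and "loewner_le S ((eta / (1 - c * kappa)) *\<^sub>R mat 1)"
proof -
  have quad: "v \<bullet> (S *v v) = c * (v \<bullet> (msum u xs S *v v)) + eta * (v \<bullet> v)" for v
    by (subst fixed) (simp add: matrix_vector_mult_add_rdistrib inner_add_right
        inner_scaleR_matrix_vector)
  have lower: "eta * (v \<bullet> v) \<le> v \<bullet> (S *v v)" for v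
    using quad[of v] inner_msum_nonneg[of u S v xs, OF u_nonneg \<open>spd S\<close>] \<open>0 \<le> c\<close> by simp
  then show "loewner_le (eta *\<^sub>R mat 1) S"
    by (simp add: loewner_le_iff_inner inner_scaleR_mat_1)
  obtain lam where lam: "\<And>v. v \<bullet> (S *v v) \<le> lam * (v \<bullet> v)"
    and lam_least: "\<And>l. (\<And>v. v \<bullet> (S *v v) \<le> l * (v \<bullet> v)) \<Longrightarrow> lam \<le> l"
    using largest_rayleigh_quotient[of S] by blast
  obtain e :: "real^'n" where "e \<noteq> 0" using zero_neq_one by blast
  then have "eta \<le> lam"
    using order_trans[OF lower lam, of e] by simp
  then have "lam > 0" using \<open>eta > 0\<close> by linarith
  have "v \<bullet> (S *v v) \<le> (c * kappa * lam + eta) * (v \<bullet> v)" for v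
    using quad[of v] mult_left_mono[OF inner_msum_le[OF u_nonneg psi_le \<open>spd S\<close> \<open>lam > 0\<close> lam
          \<open>xs \<noteq> []\<close>, where v=v] \<open>0 \<le> c\<close>]
    by (simp add: algebra_simps)
  then have "lam \<le> c * kappa * lam + eta" by (rule lam_least)
  then have "lam \<le> eta / (1 - c * kappa)"
    using \<open>c * kappa < 1\<close> by (simp add: field_simps)
  then have "v \<bullet> (S *v v) \<le> eta / (1 - c * kappa) * (v \<bullet> v)" for v
    using lam[of v] mult_right_mono[of lam _ "v \<bullet> v"] by (meson inner_ge_zero order_trans)
  then show "loewner_le S ((eta / (1 - c * kappa)) *\<^sub>R mat 1)"
    by (simp add: loewner_le_iff_inner inner_scaleR_mat_1)
qed

lemma breakdown_point_eq_1_if_uniformly_bounded: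
  fixes V :: "(real^'n) list \<Rightarrow> real^'n^'n"
  assumes "c > 0" and "X \<noteq> []"
    and bounds: "\<And>Z. Z \<noteq> [] \<Longrightarrow>
      loewner_le (c *\<^sub>R mat 1) (V Z) \<and> loewner_le (V Z) (C *\<^sub>R mat 1)"
  shows "breakdown_point V X = 1"
proof -
  have "\<not> breaks_down V X m" for m
    unfolding breaks_down_def using \<open>c > 0\<close> bounds \<open>X \<noteq> []\<close> by blast
  then show ?thesis unfolding breakdown_point_def by auto
qed

theorem theorem1:
  fixes u :: "real \<Rightarrow> real" and kappa :: real
  assumes u_nonneg: "\<And>s. s > 0 \<Longrightarrow> u s \<ge> 0"
    and psi_mono: "mono_on {0<..} (\<lambda>s. s * u s)"
    and psi_bdd: "bdd_above ((\<lambda>s. s * u s) ` {0<..})"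
    and kappa_def: "kappa = (SUP s\<in>{0<..}. s * u s)"
  shows
   "(\<forall>(eta::real) (xs :: (real^'q) list) (S :: real^'q^'q).
       eta > 0 \<and> kappa < 1 \<and> xs \<noteq> [] \<and> spd S \<and> S = msum u xs S + eta *\<^sub>R mat 1 \<longrightarrow>
       loewner_le (eta *\<^sub>R mat 1) S \<and> loewner_le S ((eta / (1 - kappa)) *\<^sub>R mat 1))
  \<and> (\<forall>(gamma::real) (xs :: (real^'q) list) (S :: real^'q^'q).
       0 < gamma \<and> gamma \<le> 1 \<and> (1 - gamma) * kappa < 1 \<and> xs \<noteq> [] \<and> spd S \<and>
       S = (1 - gamma) *\<^sub>R msum u xs S + gamma *\<^sub>R mat 1 \<longrightarrow>
       loewner_le (gamma *\<^sub>R mat 1) S \<and>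
       loewner_le S ((gamma / (1 - (1 - gamma) * kappa)) *\<^sub>R mat 1))
  \<and> (\<forall>(eta::real) (V :: (real^'q) list \<Rightarrow> real^'q^'q).
       eta > 0 \<and> kappa < 1 \<and>
       (\<forall>zs. zs \<noteq> [] \<longrightarrow> spd (V zs) \<and> V zs = msum u zs (V zs) + eta *\<^sub>R mat 1) \<longrightarrow>
       (\<forall>X. X \<noteq> [] \<longrightarrow> breakdown_point V X = 1))
  \<and> (\<forall>(gamma::real) (V :: (real^'q) list \<Rightarrow> real^'q^'q).
       0 < gamma \<and> gamma \<le> 1 \<and> (1 - gamma) * kappa < 1 \<and>
       (\<forall>zs. zs \<noteq> [] \<longrightarrow> spd (V zs) \<and>
              V zs = (1 - gamma) *\<^sub>R msum u zs (V zs) + gamma *\<^sub>R mat 1) \<longrightarrow>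
       (\<forall>X. X \<noteq> [] \<longrightarrow> breakdown_point V X = 1))"
proof -
  have psi_le: "\<And>s. s > 0 \<Longrightarrow> s * u s \<le> kappa"
    unfolding kappa_def by (rule cSUP_upper[OF _ psi_bdd]) simp
  note bounds = fixed_point_loewner_bounds[OF u_nonneg psi_le]
  have breakdown: "breakdown_point V X = 1"
    if "0 \<le> c" "c * kappa < 1" "eta > 0" "X \<noteq> []"
      and "\<forall>zs. zs \<noteq> [] \<longrightarrow> spd (V zs) \<and> V zs = c *\<^sub>R msum u zs (V zs) + eta *\<^sub>R mat 1"
    for c eta and X :: "(real^'q) list" and V
    using that
    by (intro breakdown_point_eq_1_if_uniformly_bounded[where c=eta and C="eta / (1 - c * kappa)"])
      (simp_all add: bounds)
  show ?thesis
    using bounds[of 1] bounds[of "1 - gamma" for gamma]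
      breakdown[of 1] breakdown[of "1 - gamma" for gamma]
    by auto
qed

end
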